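(* Let $X$ be a topological space in which every open set is a union of countably many clopen sets. Then $X$ is hereditarily Hurewicz (i.e., every subspace of $X$ satisfies $\mathsf{U}_{fin}(\mathrm{O},\Gamma)$) if, and only if, for every continuous map $\Psi:X\to\mathrm{EF}$, the image $\Psi[X]$ is bounded.
   Context: A cover $\mathcal{U}$ of a space $Y$ is point-cofinite if it is infinite and each point of $Y$ belongs to all but finitely many members of $\mathcal{U}$. A space $Y$ satisfies $\mathsf{U}_{fin}(\mathrm{O},\Gamma)$ (the Hurewicz property) if whenever $\mathcal{U}_1,\mathcal{U}_2,\dots$ are countable open covers of $Y$ none of which contains a finite subcover, there are finite sets $\mathcal{F}_n\subseteq\mathcal{U}_n$ such that $\{\bigcup\mathcal{F}_n:n\in\mathbb{N}\}$ is a point-cofinite cover of $Y$. Let $\overline{\mathbb{N}}=\mathbb{N}\cup\{\infty\}$ be the one-point compactification of $\mathbb{N}$, and give $\overline{\mathbb{N}}^{\mathbb{N}}$ the product topology. $\mathrm{EF}$ is the subspace of $\overline{\mathbb{N}}^{\mathbb{N}}$ of eventually finite elements, i.e., those $f$ for which there is $m$ with $f(n)<\infty$ for all $n\ge m$. For $f\in\mathrm{EF}$ and $g\in\mathbb{N}^{\mathbb{N}}$, $f\le^* g$ means $f(n)\le g(n)$ for all but finitely many $n$. A set $Y\subseteq\mathrm{EF}$ is bounded if there is $g\in\mathbb{N}^{\mathbb{N}}$ with $f\le^*g$ for all $f\in Y$. *)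

theory Defs
  imports "HOL-Analysis.Analysis"
begin

definition point_cofinite_cover :: "'a topology \<Rightarrow> 'a set set \<Rightarrow> bool" where
  "point_cofinite_cover T \<V> \<longleftrightarrow>
     infinite \<V> \<and> \<Union>\<V> = topspace T \<and>
     (\<forall>y\<in>topspace T. finite {V\<in>\<V>. y \<notin> V})"

definition hurewicz :: "'a topology \<Rightarrow> bool" where
  "hurewicz T \<longleftrightarrow>
     (\<forall>\<U> :: nat \<Rightarrow> 'a set set.
        (\<forall>n. countable (\<U> n) \<and> (\<forall>U\<in>\<U> n. openin T U) \<and> \<Union>(\<U> n) = topspace T \<and>
             \<not> (\<exists>\<F>. finite \<F> \<and> \<F> \<subseteq> \<U> n \<and> \<Union>\<F> = topspace T))
        \<longrightarrow> (\<exists>\<F> :: nat \<Rightarrow> 'a set set.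
               (\<forall>n. finite (\<F> n) \<and> \<F> n \<subseteq> \<U> n) \<and>
               point_cofinite_cover T (range (\<lambda>n. \<Union>(\<F> n)))))"

definition hereditarily_hurewicz :: "'a topology \<Rightarrow> bool" where
  "hereditarily_hurewicz X \<longleftrightarrow> (\<forall>Y \<subseteq> topspace X. hurewicz (subtopology X Y))"

text \<open>The one-point compactification of N is enat with its order topology;
  EF is the subspace of eventually finite sequences of the product space.\<close>
definition EF :: "(nat \<Rightarrow> enat) set" where
  "EF = {f. \<exists>m. \<forall>n\<ge>m. f n < \<infinity>}"

definition EF_top :: "(nat \<Rightarrow> enat) topology" where
  "EF_top = subtopology (product_topology (\<lambda>_. euclidean) UNIV) EF"

definition bounded_EF :: "(nat \<Rightarrow> enat) set \<Rightarrow> bool" where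
  "bounded_EF Y \<longleftrightarrow> (\<exists>g :: nat \<Rightarrow> nat. \<forall>f\<in>Y. \<forall>\<^sub>F n in sequentially. f n \<le> enat (g n))"

end

theory Submission
  imports Defs
begin

(* Forward direction (valid for every X): X is the countable union of the pieces on which Psi x n
   is finite from a fixed index m on.  On each piece the running maxima of the coordinates form a
   nondecreasing sequence of functions with open sublevel sets, and the Hurewicz property of the
   piece bounds them eventually by one sequence; countably many bounds combine diagonally.

   Backward direction: given countable open covers U n of a subspace Y without finite subcovers,
   refine them by clopen sets D n j of X.  The first-entry maps E k x = min {i. x in A k i}, where
   A k i = (INT n<=k. UN j<=i. D n j), are continuous into enat, and one continuous map into EF
   codes all of them.  Boundedness of its image yields h with every y in Y eventually lying in
   some D k j with j <= h k, and the members of U k containing D k j (j <= h k) form the required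
   point-cofinite selection. *)

lemma enat_less_Suc_iff: "(x :: enat) < enat (Suc k) \<longleftrightarrow> x \<le> enat k"
  by (cases x) auto

lemma enat_le_iff_the_enat_le: "y < \<infinity> \<Longrightarrow> y \<le> enat k \<longleftrightarrow> the_enat y \<le> k"
  by (cases y) auto

(* Singletons {enat t} are clopen, so the level sets of a continuous enat-valued map
  are clopen. *)
lemma enat_level_clopen:
  fixes f :: "'a \<Rightarrow> enat"
  assumes "continuous_map X euclidean f"
  shows "openin X {x \<in> topspace X. f x = enat t}" and "closedin X {x \<in> topspace X. f x = enat t}"
  using openin_continuous_map_preimage[OF assms, of "{enat t}"]
        closedin_continuous_map_preimage[OF assms, of "{enat t}"]
  by (simp_all add: open_enat)

(* The sets {..enat k} = {..<enat (Suc k)} are open. *)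
lemma enat_sublevel_open:
  fixes f :: "'a \<Rightarrow> enat"
  assumes "continuous_map X euclidean f"
  shows "openin X {x \<in> topspace X. f x \<le> enat k}"
proof -
  have "{x \<in> topspace X. f x \<le> enat k} = {x \<in> topspace X. f x \<in> {..<enat (Suc k)}}"
    by (simp add: enat_less_Suc_iff)
  then show ?thesis
    using openin_continuous_map_preimage[OF assms, of "{..<enat (Suc k)}"] by simp
qed

lemma continuous_map_if_clopen:
  assumes "openin X S" "closedin X S" "continuous_map X Y f" "continuous_map X Y g"
  shows "continuous_map X Y (\<lambda>x. if x \<in> S then f x else g x)"
proof (rule continuous_map_cases_alt)
  have S: "{x \<in> topspace X. x \<in> S} = S" and S': "{x \<in> topspace X. x \<notin> S} = topspace X - S"
    using closedin_subset[OF assms(2)] by auto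
  show "continuous_map (subtopology X (X closure_of {x \<in> topspace X. x \<in> S})) Y f"
    using assms(3) by (simp add: S continuous_map_from_subtopology)
  show "continuous_map (subtopology X (X closure_of {x \<in> topspace X. x \<notin> S})) Y g"
    using assms(4) by (simp add: S' continuous_map_from_subtopology)
  show "f x = g x" if "x \<in> X frontier_of {x \<in> topspace X. x \<in> S}" for x
  proof -
    have "X frontier_of S = {}"
      using clopenin_eq_frontier_of[of X S] assms(1,2) by simp
    then show ?thesis using that by (simp add: S)
  qed
qed

lemma hurewiczI:
  assumes "\<And>\<U> :: nat \<Rightarrow> 'a set set.
    \<lbrakk>\<And>n. countable (\<U> n); \<And>n V. V \<in> \<U> n \<Longrightarrow> openin T V; \<And>n. \<Union>(\<U> n) = topspace T;
     \<And>n \<F>. finite \<F> \<Longrightarrow> \<F> \<subseteq> \<U> n \<Longrightarrow> \<Union>\<F> \<noteq> topspace T\<rbrakk>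
    \<Longrightarrow> \<exists>\<F>. (\<forall>n. finite (\<F> n) \<and> \<F> n \<subseteq> \<U> n) \<and> point_cofinite_cover T (range (\<lambda>n. \<Union>(\<F> n)))"
  shows "hurewicz T"
  unfolding hurewicz_def
proof (intro allI impI)
  fix \<U> :: "nat \<Rightarrow> 'a set set"
  assume H: "\<forall>n. countable (\<U> n) \<and> (\<forall>V\<in>\<U> n. openin T V) \<and> \<Union>(\<U> n) = topspace T \<and>
               \<not> (\<exists>\<F>. finite \<F> \<and> \<F> \<subseteq> \<U> n \<and> \<Union>\<F> = topspace T)"
  show "\<exists>\<F>. (\<forall>n. finite (\<F> n) \<and> \<F> n \<subseteq> \<U> n) \<and> point_cofinite_cover T (range (\<lambda>n. \<Union>(\<F> n)))"
  proof (rule assms)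
    show "countable (\<U> n)" "\<Union>(\<U> n) = topspace T" for n
      using spec[OF H, of n] by simp_all
    show "openin T V" if "V \<in> \<U> n" for n V
      using spec[OF H, of n] that by simp
    show "\<Union>\<F> \<noteq> topspace T" if "finite \<F>" "\<F> \<subseteq> \<U> n" for n \<F>
      using spec[OF H, of n] that by auto
  qed
qed

lemma hurewiczD:
  fixes \<U> :: "nat \<Rightarrow> 'a set set"
  assumes "hurewicz T" and "\<And>n. countable (\<U> n)" and "\<And>n V. V \<in> \<U> n \<Longrightarrow> openin T V"
    and "\<And>n. \<Union>(\<U> n) = topspace T"
    and "\<And>n \<F>. finite \<F> \<Longrightarrow> \<F> \<subseteq> \<U> n \<Longrightarrow> \<Union>\<F> \<noteq> topspace T"
  obtains \<F> where "\<And>n. finite (\<F> n)" and "\<And>n. \<F> n \<subseteq> \<U> n"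
    and "point_cofinite_cover T (range (\<lambda>n. \<Union>(\<F> n)))"
proof -
  have "\<not> (\<exists>\<F>. finite \<F> \<and> \<F> \<subseteq> \<U> n \<and> \<Union>\<F> = topspace T)" for n
  proof
    assume "\<exists>\<F>. finite \<F> \<and> \<F> \<subseteq> \<U> n \<and> \<Union>\<F> = topspace T"
    then obtain \<F> where "finite \<F>" "\<F> \<subseteq> \<U> n" "\<Union>\<F> = topspace T"
      by (elim exE conjE)
    with assms(5) show False by blast
  qed
  with assms(2-4) have "\<forall>n. countable (\<U> n) \<and> (\<forall>V\<in>\<U> n. openin T V) \<and> \<Union>(\<U> n) = topspace T \<and>
            \<not> (\<exists>\<F>. finite \<F> \<and> \<F> \<subseteq> \<U> n \<and> \<Union>\<F> = topspace T)"
    by simp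
  then have "\<exists>\<F>. (\<forall>n. finite (\<F> n) \<and> \<F> n \<subseteq> \<U> n) \<and> point_cofinite_cover T (range (\<lambda>n. \<Union>(\<F> n)))"
    by (rule mp[OF spec[OF assms(1)[unfolded hurewicz_def]]])
  then obtain \<F> where \<F>: "\<forall>n. finite (\<F> n) \<and> \<F> n \<subseteq> \<U> n"
    and pc: "point_cofinite_cover T (range (\<lambda>n. \<Union>(\<F> n)))"
    by (elim exE conjE)
  show thesis
  proof (rule that)
    show "finite (\<F> n)" "\<F> n \<subseteq> \<U> n" for n
      using \<F> by blast+
  qed (fact pc)
qed

lemma finite_subset_chain_bound:
  fixes S :: "nat \<Rightarrow> 'a set"
  assumes "finite F" "F \<subseteq> range S" "mono S"
  shows "\<exists>K. \<Union>F \<subseteq> S K"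
proof -
  obtain I where I: "finite I" "F = S ` I"
    using finite_subset_image[OF assms(1,2)] by blast
  then obtain K where "I \<subseteq> {..<K}"
    using finite_nat_bounded by blast
  then have "S i \<subseteq> S K" if "i \<in> I" for i
    using that by (intro monoD[OF assms(3)]) auto
  then have "\<Union>F \<subseteq> S K"
    unfolding I(2) by (simp add: UN_subset_iff)
  then show ?thesis ..
qed

lemma finite_sublevel_subcover_bound:
  fixes f :: "'a \<Rightarrow> nat"
  assumes "finite F" "F \<subseteq> range (\<lambda>k. {x \<in> A. f x \<le> k})" "\<Union>F = A"
  shows "\<exists>K. \<forall>x\<in>A. f x \<le> K"
proof -
  have "mono (\<lambda>k. {x \<in> A. f x \<le> k})"
    by (rule monoI) auto
  from finite_subset_chain_bound[OF assms(1,2) this]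
  obtain K where "\<Union>F \<subseteq> {x \<in> A. f x \<le> K}" ..
  then have "\<forall>x\<in>A. f x \<le> K"
    using assms(3) by auto
  then show ?thesis ..
qed

lemma finite_subset_range_bound:
  fixes W :: "nat \<Rightarrow> 'a"
  assumes "finite F" "F \<subseteq> range W"
  shows "\<exists>M. F \<subseteq> W ` {..<M}"
proof -
  obtain I where I: "finite I" "F = W ` I"
    using finite_subset_image[OF assms] by blast
  then obtain M where "I \<subseteq> {..<M}"
    using finite_nat_bounded by blast
  then have "F \<subseteq> W ` {..<M}"
    unfolding I(2) by (rule image_mono)
  then show ?thesis ..
qed

(* A point-cofinite cover indexed by a sequence W (possibly with repetitions) can be
  re-indexed by a sequence r with n <= r n so that every point lies in W (r n) for almost all n. *)
lemma point_cofinite_cover_subsequence: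
  fixes W :: "nat \<Rightarrow> 'a set"
  assumes pc: "point_cofinite_cover T (range W)"
  shows "\<exists>r. (\<forall>n. n \<le> r n) \<and> (\<forall>x\<in>topspace T. \<forall>\<^sub>F n in sequentially. x \<in> W (r n))"
proof -
  have "\<exists>j. W j \<notin> W ` {..<n}" for n
  proof (rule ccontr)
    assume "\<nexists>j. W j \<notin> W ` {..<n}"
    then have "range W \<subseteq> W ` {..<n}" by blast
    then have "finite (range W)" by (rule finite_subset) simp
    then show False using pc unfolding point_cofinite_cover_def by simp
  qed
  then obtain r where r: "\<And>n. W (r n) \<notin> W ` {..<n}"
    by metis
  have "n \<le> r n" for n
  proof (rule ccontr)
    assume "\<not> n \<le> r n"
    then have "W (r n) \<in> W ` {..<n}" by simp
    then show False using r[of n] by contradiction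
  qed
  moreover have "\<forall>\<^sub>F n in sequentially. x \<in> W (r n)" if x: "x \<in> topspace T" for x
  proof -
    have "finite {V \<in> range W. x \<notin> V}"
      using pc x unfolding point_cofinite_cover_def by blast
    then obtain M where M: "{V \<in> range W. x \<notin> V} \<subseteq> W ` {..<M}"
      using finite_subset_range_bound[of _ W] by blast
    have "x \<in> W (r n)" if "M \<le> n" for n
    proof (rule ccontr)
      assume "x \<notin> W (r n)"
      then have "W (r n) \<in> W ` {..<M}" using M by blast
      also have "\<dots> \<subseteq> W ` {..<n}" using that by (intro image_mono) auto
      finally show False using r[of n] by contradiction
    qed
    then show ?thesis
      unfolding eventually_sequentially by blast
  qed
  ultimately show ?thesis by blast
qed

(* Conversely, proper subsets W k that eventually contain every point form a
  point-cofinite cover; the properness makes the family infinite. *)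
lemma point_cofinite_cover_if_eventually:
  fixes W :: "nat \<Rightarrow> 'a set"
  assumes sub: "\<And>k. W k \<subseteq> topspace T"
    and proper: "\<And>k. W k \<noteq> topspace T"
    and ev: "\<And>x. x \<in> topspace T \<Longrightarrow> \<forall>\<^sub>F k in sequentially. x \<in> W k"
  shows "point_cofinite_cover T (range W)"
  unfolding point_cofinite_cover_def
proof (intro conjI ballI)
  show "infinite (range W)"
  proof
    assume fin: "finite (range W)"
    have "\<forall>V\<in>range W. \<exists>p. p \<in> topspace T - V"
      using sub proper by blast
    then obtain p where p: "\<And>V. V \<in> range W \<Longrightarrow> p V \<in> topspace T - V"
      by metis
    have "\<forall>\<^sub>F k in sequentially. \<forall>V\<in>range W. p V \<in> W k"
      using p by (intro eventually_ball_finite fin ballI ev) blast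
    then obtain k where "\<forall>V\<in>range W. p V \<in> W k"
      unfolding eventually_sequentially by blast
    then show False using p[of "W k"] by blast
  qed
  show "\<Union>(range W) = topspace T"
  proof
    show "\<Union>(range W) \<subseteq> topspace T" using sub by blast
    show "topspace T \<subseteq> \<Union>(range W)"
    proof
      fix x assume "x \<in> topspace T"
      then obtain k where "x \<in> W k"
        using ev unfolding eventually_sequentially by blast
      then show "x \<in> \<Union>(range W)" by blast
    qed
  qed
  fix x assume "x \<in> topspace T"
  then obtain M where "\<And>k. M \<le> k \<Longrightarrow> x \<in> W k"
    using ev unfolding eventually_sequentially by blast
  then have "{V \<in> range W. x \<notin> V} \<subseteq> W ` {..<M}"
    by (auto simp: not_less[symmetric])
  then show "finite {V \<in> range W. x \<notin> V}"
    by (rule finite_subset) simp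
qed

(* Selecting the members V k j (j <= h k) of the k-th cover gives a point-cofinite cover
  as soon as every point eventually lies in one of them; no finite subcover keeps the unions proper. *)
lemma point_cofinite_selection:
  fixes V :: "nat \<Rightarrow> nat \<Rightarrow> 'a set" and h :: "nat \<Rightarrow> nat"
  assumes cover: "\<And>n. \<Union>(\<U> n) = topspace T"
    and no_finite_subcover: "\<And>n \<F>. finite \<F> \<Longrightarrow> \<F> \<subseteq> \<U> n \<Longrightarrow> \<Union>\<F> \<noteq> topspace T"
    and V: "\<And>n j. V n j \<in> \<U> n"
    and ev: "\<And>y. y \<in> topspace T \<Longrightarrow> \<forall>\<^sub>F k in sequentially. \<exists>j\<le>h k. y \<in> V k j"
  shows "point_cofinite_cover T (range (\<lambda>k. \<Union>(V k ` {..h k})))"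
proof (rule point_cofinite_cover_if_eventually)
  show "\<Union>(V k ` {..h k}) \<subseteq> topspace T" for k
    using V cover by blast
  show "\<Union>(V k ` {..h k}) \<noteq> topspace T" for k
    using V by (intro no_finite_subcover) auto
  show "\<forall>\<^sub>F k in sequentially. y \<in> \<Union>(V k ` {..h k})" if "y \<in> topspace T" for y
    using ev[OF that] by eventually_elim blast
qed

lemma bounded_EF_UN:
  fixes S :: "nat \<Rightarrow> (nat \<Rightarrow> enat) set"
  assumes "\<And>m. bounded_EF (S m)"
  shows "bounded_EF (\<Union>m. S m)"
proof -
  obtain G where G: "\<And>m f. f \<in> S m \<Longrightarrow> \<forall>\<^sub>F n in sequentially. f n \<le> enat (G m n)"
    using assms unfolding bounded_EF_def by metis
  define g where "g n = (\<Sum>m\<le>n. G m n)" for n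
  have "\<forall>\<^sub>F n in sequentially. f n \<le> enat (g n)" if f: "f \<in> S m" for f m
    using G[OF f] eventually_ge_at_top[of m]
  proof eventually_elim
    case (elim n)
    have "G m n \<le> g n"
      unfolding g_def by (rule member_le_sum[where f = "\<lambda>m. G m n"]) (use elim in auto)
    then show ?case using elim by (meson enat_ord_simps(1) order_trans)
  qed
  then show ?thesis unfolding bounded_EF_def by blast
qed

(* If some h N is unbounded, then for j >= 0 the sublevel sets of h (N + j)
  form countable open covers without finite subcovers, and the Hurewicz selection yields the bound. *)
lemma hurewicz_bounds_monotone_sequence:
  fixes h :: "nat \<Rightarrow> 'a \<Rightarrow> nat"
  assumes H: "hurewicz T"
    and sublevel_open: "\<And>n k. openin T {x \<in> topspace T. h n x \<le> k}"
    and mono: "\<And>n x. h n x \<le> h (Suc n) x"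
  shows "\<exists>g. \<forall>x\<in>topspace T. \<forall>\<^sub>F n in sequentially. h n x \<le> g n"
proof (cases "\<forall>n. \<exists>K. \<forall>x\<in>topspace T. h n x \<le> K")
  case True
  then obtain K where "\<And>n x. x \<in> topspace T \<Longrightarrow> h n x \<le> K n"
    by metis
  then show ?thesis by (auto intro: always_eventually)
next
  case False
  then obtain N where N: "\<And>K. \<exists>x\<in>topspace T. K < h N x"
    by (auto simp: not_le)
  have h_mono: "h i x \<le> h j x" if "i \<le> j" for i j x
    using lift_Suc_mono_le[of "\<lambda>n. h n x", OF mono that] .
  define S where "S j k = {x \<in> topspace T. h (N + j) x \<le> k}" for j k
  have no_finite_subcover: "\<Union>F \<noteq> topspace T" if F: "finite F" "F \<subseteq> range (S j)" for F j
  proof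
    assume "\<Union>F = topspace T"
    then obtain K where "\<forall>x\<in>topspace T. h (N + j) x \<le> K"
      using finite_sublevel_subcover_bound[OF F[unfolded S_def] \<open>\<Union>F = topspace T\<close>] by blast
    moreover obtain x where "x \<in> topspace T" "K < h N x"
      using N by blast
    ultimately show False
      using h_mono[of N "N + j" x] by auto
  qed
  have "\<exists>F. (\<forall>j. finite (F j) \<and> F j \<subseteq> range (S j)) \<and> point_cofinite_cover T (range (\<lambda>j. \<Union>(F j)))"
  proof (rule hurewiczD[where T = T and \<U> = "\<lambda>j. range (S j)"])
    show "hurewicz T" by (fact H)
    show "countable (range (S j))" for j by simp
    show "openin T V" if "V \<in> range (S j)" for j V
      using that sublevel_open by (auto simp: S_def)
    show "\<Union>(range (S j)) = topspace T" for j
      unfolding S_def by auto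
    show "\<Union>F \<noteq> topspace T" if "finite F" "F \<subseteq> range (S j)" for j F
      using that by (rule no_finite_subcover)
  qed blast
  then obtain F where F: "\<And>j. finite (F j)" "\<And>j. F j \<subseteq> range (S j)"
    and pc: "point_cofinite_cover T (range (\<lambda>j. \<Union>(F j)))"
    by blast
  have "\<exists>K. \<Union>(F j) \<subseteq> S j K" for j
    using F(1,2)[of j] by (intro finite_subset_chain_bound) (auto simp: S_def intro: monoI)
  then obtain k where k: "\<And>j. \<Union>(F j) \<subseteq> S j (k j)"
    by metis
  obtain r where r_ge: "\<And>n. n \<le> r n"
    and r_ev: "\<And>x. x \<in> topspace T \<Longrightarrow> \<forall>\<^sub>F n in sequentially. x \<in> \<Union>(F (r n))"
    using point_cofinite_cover_subsequence[OF pc] by blast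
  have "\<forall>\<^sub>F n in sequentially. h n x \<le> k (r n)" if "x \<in> topspace T" for x
    using r_ev[OF that]
  proof eventually_elim
    case (elim n)
    then have "h (N + r n) x \<le> k (r n)"
      using k[of "r n"] by (auto simp: S_def)
    moreover have "h n x \<le> h (N + r n) x"
      using r_ge[of n] by (intro h_mono) simp
    ultimately show ?case by simp
  qed
  then show ?thesis by (intro exI[of _ "\<lambda>n. k (r n)"]) blast
qed

(* A continuous map from a Hurewicz space into enat^N whose coordinates are finite from
  a fixed index m on has bounded image: apply the previous lemma to the running maxima of the
  coordinates m..n. *)
lemma hurewicz_bounded_if_eventually_finite:
  assumes T: "hurewicz T"
    and coord: "\<And>i. continuous_map T euclidean (\<lambda>x. \<Psi> x i)"
    and fin: "\<And>x n. x \<in> topspace T \<Longrightarrow> m \<le> n \<Longrightarrow> \<Psi> x n < \<infinity>"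
  shows "bounded_EF (\<Psi> ` topspace T)"
proof -
  define h where "h n x = Max (insert 0 ((\<lambda>i. the_enat (\<Psi> x i)) ` {m..n}))" for n x
  have h_le: "h n x \<le> k \<longleftrightarrow> (\<forall>i\<in>{m..n}. \<Psi> x i \<le> enat k)" if "x \<in> topspace T" for n x k
    using that fin by (auto simp: h_def enat_le_iff_the_enat_le)
  have "{x \<in> topspace T. h n x \<le> k} = (\<Inter>i\<in>{m..n}. {x \<in> topspace T. \<Psi> x i \<le> enat k}) \<inter> topspace T"
    for n k
    using h_le by auto
  then have "openin T {x \<in> topspace T. h n x \<le> k}" for n k
    by (auto intro!: enat_sublevel_open coord)
  moreover have "h n x \<le> h (Suc n) x" for n x
    unfolding h_def by (rule Max_mono) auto
  ultimately obtain g where g: "\<And>x. x \<in> topspace T \<Longrightarrow> \<forall>\<^sub>F n in sequentially. h n x \<le> g n"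
    using hurewicz_bounds_monotone_sequence[OF T] by metis
  have "\<forall>\<^sub>F n in sequentially. \<Psi> x n \<le> enat (g n)" if x: "x \<in> topspace T" for x
    using g[OF x] eventually_ge_at_top[of m]
  proof eventually_elim
    case (elim n)
    then have "\<Psi> x n \<le> enat (h n x)" using h_le[OF x, of n "h n x"] by simp
    then show ?case using elim by (meson enat_ord_simps(1) order_trans)
  qed
  then show ?thesis unfolding bounded_EF_def by blast
qed

(* Forward direction (no hypothesis on X needed): X is the union of the pieces X' m on
  which Psi x n is finite for n >= m, each piece is Hurewicz, and the countably many bounded
  images combine by bounded_EF_UN. *)
lemma hurewicz_imp_bounded:
  assumes HH: "hereditarily_hurewicz X" and cont: "continuous_map X EF_top \<Psi>"
  shows "bounded_EF (\<Psi> ` topspace X)"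
proof -
  have coord: "continuous_map X euclidean (\<lambda>x. \<Psi> x i)" for i
    using cont unfolding EF_top_def continuous_map_in_subtopology continuous_map_componentwise_UNIV
    by blast
  define X' where "X' m = {x \<in> topspace X. \<forall>n\<ge>m. \<Psi> x n < \<infinity>}" for m
  have "bounded_EF (\<Psi> ` X' m)" for m
  proof -
    have X': "topspace (subtopology X (X' m)) = X' m"
      by (auto simp: X'_def)
    have "bounded_EF (\<Psi> ` topspace (subtopology X (X' m)))"
    proof (rule hurewicz_bounded_if_eventually_finite)
      have "X' m \<subseteq> topspace X"
        unfolding X'_def by blast
      then show "hurewicz (subtopology X (X' m))"
        using HH unfolding hereditarily_hurewicz_def by blast
      show "continuous_map (subtopology X (X' m)) euclidean (\<lambda>x. \<Psi> x i)" for i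
        using coord by (rule continuous_map_from_subtopology)
      show "\<Psi> x n < \<infinity>" if "x \<in> topspace (subtopology X (X' m))" "m \<le> n" for x n
        using that(1)[unfolded X'] that(2) unfolding X'_def by blast
    qed
    then show ?thesis unfolding X' .
  qed
  moreover have "topspace X = (\<Union>m. X' m)"
  proof
    show "topspace X \<subseteq> (\<Union>m. X' m)"
    proof
      fix x assume x: "x \<in> topspace X"
      then have "\<Psi> x \<in> EF"
        using cont unfolding EF_top_def continuous_map_in_subtopology by blast
      then obtain m where "\<forall>n\<ge>m. \<Psi> x n < \<infinity>"
        unfolding EF_def by blast
      then show "x \<in> (\<Union>m. X' m)"
        using x unfolding X'_def by blast
    qed
    show "(\<Union>m. X' m) \<subseteq> topspace X"
      unfolding X'_def by blast
  qed
  ultimately show ?thesis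
    by (simp add: image_UN bounded_EF_UN)
qed

lemma clopen_refinement:
  assumes clop: "\<forall>U. openin X U \<longrightarrow>
             (\<exists>\<C>. countable \<C> \<and> (\<forall>C\<in>\<C>. openin X C \<and> closedin X C) \<and> \<Union>\<C> = U)"
    and Y: "Y \<subseteq> topspace X" "Y \<noteq> {}"
    and \<U>: "countable \<U>" "\<And>V. V \<in> \<U> \<Longrightarrow> openin (subtopology X Y) V" "\<Union>\<U> = Y"
  shows "\<exists>D :: nat \<Rightarrow> 'a set. (\<forall>j. openin X (D j) \<and> closedin X (D j)) \<and>
           Y \<subseteq> (\<Union>j. D j) \<and> (\<forall>j. \<exists>V\<in>\<U>. D j \<inter> Y \<subseteq> V)"
proof -
  have "\<forall>V\<in>\<U>. \<exists>\<C>. countable \<C> \<and> (\<forall>C\<in>\<C>. openin X C \<and> closedin X C) \<and> \<Union>\<C> \<inter> Y = V"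
  proof
    fix V assume "V \<in> \<U>"
    then obtain U where "openin X U" "V = U \<inter> Y"
      using \<U>(2) unfolding openin_subtopology by blast
    then show "\<exists>\<C>. countable \<C> \<and> (\<forall>C\<in>\<C>. openin X C \<and> closedin X C) \<and> \<Union>\<C> \<inter> Y = V"
      using clop by blast
  qed
  then obtain \<C> where \<C>: "\<And>V. V \<in> \<U> \<Longrightarrow>
      countable (\<C> V) \<and> (\<forall>C\<in>\<C> V. openin X C \<and> closedin X C) \<and> \<Union>(\<C> V) \<inter> Y = V"
    by metis
  define \<F> where "\<F> = \<Union>(\<C> ` \<U>)"
  have "countable \<F>"
    unfolding \<F>_def using \<U>(1) \<C> by (intro countable_UN) auto
  have cover: "Y \<subseteq> \<Union>\<F>"
    using \<U>(3) \<C> unfolding \<F>_def by blast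
  then have "\<F> \<noteq> {}" using Y(2) by blast
  define D where "D = from_nat_into \<F>"
  have "range D = \<F>"
    unfolding D_def using \<open>\<F> \<noteq> {}\<close> \<open>countable \<F>\<close> by (rule range_from_nat_into)
  moreover have "\<forall>C\<in>\<F>. openin X C \<and> closedin X C"
    using \<C> unfolding \<F>_def by blast
  moreover have "\<forall>C\<in>\<F>. \<exists>V\<in>\<U>. C \<inter> Y \<subseteq> V"
    using \<C> unfolding \<F>_def by blast
  ultimately show ?thesis
    using cover by (intro exI[of _ D]) (metis rangeI)
qed

(* The first index i with x in B i, or infinity if there is none.  For clopen B i this is a
  continuous map into enat. *)
definition first_index :: "(nat \<Rightarrow> 'a set) \<Rightarrow> 'a \<Rightarrow> enat" where
  "first_index B x = (INF i \<in> {i. x \<in> B i}. enat i)"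

lemma first_index_less_iff: "first_index B x < a \<longleftrightarrow> (\<exists>i. x \<in> B i \<and> enat i < a)"
  by (auto simp: first_index_def INF_less_iff)

lemma first_index_greater_iff: "enat t < first_index B x \<longleftrightarrow> (\<forall>i. x \<in> B i \<longrightarrow> t < i)"
  by (auto simp: first_index_def Suc_ile_eq[symmetric] le_INF_iff)

lemma first_index_le: "x \<in> B i \<Longrightarrow> first_index B x \<le> enat i"
  unfolding first_index_def by (rule INF_lower) simp

lemma first_index_le_iff:
  assumes "mono B"
  shows "first_index B x \<le> enat t \<longleftrightarrow> x \<in> B t"
proof
  assume "first_index B x \<le> enat t"
  then have "first_index B x < enat (Suc t)" by (simp add: enat_less_Suc_iff)
  then obtain i where "x \<in> B i" "i \<le> t" by (auto simp: first_index_less_iff)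
  then show "x \<in> B t" using monoD[OF assms] by blast
qed (rule first_index_le)

(* {first_index B < a} is a union of sets B i, and {enat t < first_index B} is the
  complement of a finite union of them. *)
lemma continuous_map_first_index:
  assumes "\<And>i. openin X (B i)" and "\<And>i. closedin X (B i)"
  shows "continuous_map X euclidean (first_index B)"
  unfolding continuous_map_upper_lower_semicontinuous_lt
proof (intro conjI allI)
  fix a :: enat
  have "{x \<in> topspace X. first_index B x < a} = topspace X \<inter> (\<Union>i \<in> {i. enat i < a}. B i)"
    by (auto simp: first_index_less_iff)
  then show "openin X {x \<in> topspace X. first_index B x < a}"
    using assms(1) by (auto intro!: openin_Int openin_Union)
  show "openin X {x \<in> topspace X. a < first_index B x}"
  proof (cases a)
    case (enat t)
    have "{x \<in> topspace X. a < first_index B x} = topspace X - (\<Union>i\<le>t. B i)"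
      by (auto simp: enat first_index_greater_iff not_less)
    then show ?thesis
      using assms(2) by (auto intro!: openin_diff closedin_Union)
  next
    case infinity
    then show ?thesis by simp
  qed
qed

lemma common_bound_of_finitely_many_covers:
  fixes D :: "nat \<Rightarrow> nat \<Rightarrow> 'a set"
  assumes "\<And>n. y \<in> (\<Union>j. D n j)"
  shows "\<exists>i. \<forall>n\<le>k. y \<in> (\<Union>j\<le>i. D n j)"
proof -
  have "\<forall>n. \<exists>j. y \<in> D n j"
    using assms by blast
  then obtain j where j: "\<And>n. y \<in> D n (j n)"
    by metis
  have "y \<in> (\<Union>j'\<le>Max (j ` {..k}). D n j')" if "n \<le> k" for n
    using j[of n] that by (intro UN_I[of "j n"]) auto
  then show ?thesis by blast
qed

(* Given clopen families D n covering Y, the sets A k i = (INT n<=k. UN j<=i. D n j)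
  increase in i and decrease in k, so the first-entry maps E k = first_index (A k) are continuous,
  nondecreasing in k and finite on Y, and E k y <= i puts y into some D k j with j <= i. *)
lemma first_entry_maps:
  fixes D :: "nat \<Rightarrow> nat \<Rightarrow> 'a set"
  assumes D_open: "\<And>n j. openin X (D n j)" and D_closed: "\<And>n j. closedin X (D n j)"
    and Y: "Y \<subseteq> topspace X" and D_cover: "\<And>n. Y \<subseteq> (\<Union>j. D n j)"
  obtains E :: "nat \<Rightarrow> 'a \<Rightarrow> enat"
  where "\<And>k. continuous_map X euclidean (E k)" and "\<And>k x. E k x \<le> E (Suc k) x"
    and "\<And>k y. y \<in> Y \<Longrightarrow> E k y < \<infinity>"
    and "\<And>k i y. y \<in> Y \<Longrightarrow> E k y \<le> enat i \<Longrightarrow> y \<in> (\<Union>j\<le>i. D k j)"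
proof -
  define A where "A k i = (\<Inter>n\<le>k. \<Union>j\<le>i. D n j) \<inter> topspace X" for k i
  have A_open: "openin X (A k i)" for k i
    unfolding A_def using D_open by (intro openin_INT) auto
  have A_closed: "closedin X (A k i)" for k i
    unfolding A_def using D_closed by (intro closedin_Int closedin_Inter) (auto intro!: closedin_Union)
  have A_mono: "mono (A k)" for k
    unfolding A_def by (intro monoI) fastforce
  have A_antimono: "A (Suc k) i \<subseteq> A k i" for k i
    unfolding A_def by auto
  have A_cover: "\<exists>i. y \<in> A k i" if y: "y \<in> Y" for k y
    using common_bound_of_finitely_many_covers[of y D k] D_cover y Y unfolding A_def by blast
  define E where "E k = first_index (A k)" for k
  have "continuous_map X euclidean (E k)" for k
    unfolding E_def using A_open A_closed by (rule continuous_map_first_index)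
  moreover have "E k x \<le> E (Suc k) x" for k x
    unfolding E_def first_index_def using A_antimono by (intro INF_superset_mono) auto
  moreover have "E k y < \<infinity>" if y: "y \<in> Y" for k y
  proof -
    obtain i where "y \<in> A k i"
      using A_cover[OF y] by blast
    then have "E k y \<le> enat i"
      unfolding E_def by (rule first_index_le)
    then show ?thesis
      using le_less_trans[of "E k y" "enat i" \<infinity>] by simp
  qed
  moreover have "y \<in> (\<Union>j\<le>i. D k j)" if "E k y \<le> enat i" for k i y
  proof -
    have "y \<in> A k i"
      using that first_index_le_iff[OF A_mono] unfolding E_def by blast
    then show ?thesis
      unfolding A_def by blast
  qed
  ultimately show thesis
    by (rule that)
qed

(* Coding a sequence of enat-valued maps E k into one map to enat^N: coordinate <k,t> records
  E (Suc k) x on the clopen set where E k x = t. *)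
definition code_map :: "(nat \<Rightarrow> 'a \<Rightarrow> enat) \<Rightarrow> 'a \<Rightarrow> nat \<Rightarrow> enat" where
  "code_map E x c = (case prod_decode c of (k, t) \<Rightarrow> if E k x = enat t then E (Suc k) x else 0)"

lemma code_map_encode:
  "code_map E x (prod_encode (k, t)) = (if E k x = enat t then E (Suc k) x else 0)"
  by (simp add: code_map_def)

(* If E k x is nondecreasing in k, only the coordinate <k, E k x> with k the last index of
  finiteness can be infinite, so the code lies in EF. *)
lemma code_map_in_EF:
  assumes mono: "\<And>k. E k x \<le> E (Suc k) x"
  shows "code_map E x \<in> EF"
proof -
  define L where "L = (LEAST k. E (Suc k) x = \<infinity>)"
  have "{c. code_map E x c = \<infinity>} \<subseteq> {prod_encode (L, the_enat (E L x))}"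
  proof
    fix c assume "c \<in> {c. code_map E x c = \<infinity>}"
    moreover obtain k t where c: "c = prod_encode (k, t)"
      by (metis prod_decode_inverse surj_pair)
    ultimately have kt: "E k x = enat t" "E (Suc k) x = \<infinity>"
      by (auto simp: code_map_encode split: if_splits)
    have "L = k"
    proof (rule antisym)
      show "L \<le> k" unfolding L_def using kt(2) by (rule Least_le)
      show "k \<le> L"
      proof (rule ccontr)
        assume "\<not> k \<le> L"
        then have "E (Suc L) x \<le> E k x"
          using lift_Suc_mono_le[of "\<lambda>k. E k x", OF mono] by simp
        moreover have "E (Suc L) x = \<infinity>"
          unfolding L_def using kt(2) by (rule LeastI)
        ultimately show False using kt(1) by simp
      qed
    qed
    then show "c \<in> {prod_encode (L, the_enat (E L x))}" using c kt(1) by simp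
  qed
  then have "finite {c. code_map E x c = \<infinity>}"
    by (rule finite_subset) simp
  then obtain m where "{c. code_map E x c = \<infinity>} \<subseteq> {..<m}"
    using finite_nat_bounded by blast
  then have "\<forall>n\<ge>m. code_map E x n < \<infinity>" by fastforce
  then show ?thesis unfolding EF_def by blast
qed

(* Each coordinate of the code glues E (Suc k) and 0 along a clopen level set of E k. *)
lemma continuous_map_code_map:
  assumes cont: "\<And>k. continuous_map X euclidean (E k)"
    and mono: "\<And>k x. E k x \<le> E (Suc k) x"
  shows "continuous_map X EF_top (code_map E)"
  unfolding EF_top_def continuous_map_in_subtopology continuous_map_componentwise_UNIV
proof (intro conjI allI Pi_I code_map_in_EF mono)
  fix c
  obtain k t where c: "c = prod_encode (k, t)"
    by (metis prod_decode_inverse surj_pair)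
  have "continuous_map X euclidean
          (\<lambda>x. if x \<in> {x \<in> topspace X. E k x = enat t} then E (Suc k) x else 0)"
    by (intro continuous_map_if_clopen enat_level_clopen cont continuous_map_const[THEN iffD2]) simp
  then show "continuous_map X euclidean (\<lambda>x. code_map E x c)"
    by (rule continuous_map_eq) (simp add: c code_map_encode)
qed

lemma prod_encode_mono2: "b \<le> b' \<Longrightarrow> prod_encode (a, b) \<le> prod_encode (a, b')"
  unfolding prod_encode_def by (simp add: lift_Suc_mono_le[of triangle])

fun chase :: "(nat \<Rightarrow> nat) \<Rightarrow> nat \<Rightarrow> nat \<Rightarrow> nat \<Rightarrow> nat" where
  "chase G K s 0 = s"
| "chase G K s (Suc j) = G (prod_encode (K + j, chase G K s j))"

lemma chase_upper_bound:
  assumes step: "\<And>k. M \<le> k \<Longrightarrow> a (Suc k) \<le> G (prod_encode (k, a k))"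
    and "mono G"
  shows "a (M + j) \<le> chase G M (a M) j"
proof (induction j)
  case (Suc j)
  have "a (M + Suc j) \<le> G (prod_encode (M + j, a (M + j)))"
    using step[of "M + j"] by simp
  also have "\<dots> \<le> G (prod_encode (M + j, chase G M (a M) j))"
    using Suc.IH by (intro monoD[OF \<open>mono G\<close>] prod_encode_mono2)
  finally show ?case by simp
qed simp

(* One sequence h eventually dominates every sequence a obeying the recursion from
  some time on: h k dominates all chases started at a time K <= k from a value s <= k. *)
lemma uniform_bound_of_code_recursion:
  fixes g :: "nat \<Rightarrow> nat"
  shows "\<exists>h. \<forall>a. (\<exists>M. \<forall>k\<ge>M. a (Suc k) \<le> g (prod_encode (k, a k)))
                \<longrightarrow> (\<forall>\<^sub>F k in sequentially. a k \<le> h k)"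
proof -
  define G where "G n = (\<Sum>i\<le>n. g i)" for n
  have gG: "g n \<le> G n" for n
    unfolding G_def by (rule member_le_sum) auto
  have "mono G"
    unfolding G_def by (intro monoI sum_mono2) auto
  define h where "h k = (\<Sum>K\<le>k. \<Sum>s\<le>k. chase G K s (k - K))" for k
  show ?thesis
  proof (intro exI[of _ h] allI impI)
    fix a assume "\<exists>M. \<forall>k\<ge>M. a (Suc k) \<le> g (prod_encode (k, a k))"
    then obtain M where M: "\<And>k. M \<le> k \<Longrightarrow> a (Suc k) \<le> G (prod_encode (k, a k))"
      using gG le_trans by blast
    have "a k \<le> h k" if k: "M + a M \<le> k" for k
    proof -
      have "a k = a (M + (k - M))" using k by simp
      also have "\<dots> \<le> chase G M (a M) (k - M)"
        by (rule chase_upper_bound[OF M \<open>mono G\<close>])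
      also have "\<dots> \<le> (\<Sum>s\<le>k. chase G M s (k - M))"
        by (rule member_le_sum[where f = "\<lambda>s. chase G M s (k - M)"]) (use k in auto)
      also have "\<dots> \<le> h k"
        unfolding h_def
        by (rule member_le_sum[where f = "\<lambda>K. \<Sum>s\<le>k. chase G K s (k - K)"]) (use k in auto)
      finally show ?thesis .
    qed
    then show "\<forall>\<^sub>F k in sequentially. a k \<le> h k"
      unfolding eventually_sequentially by blast
  qed
qed

lemma code_map_bound:
  assumes bdd: "bounded_EF (code_map E ` Y)"
    and fin: "\<And>k y. y \<in> Y \<Longrightarrow> E k y < \<infinity>"
  shows "\<exists>h. \<forall>y\<in>Y. \<forall>\<^sub>F k in sequentially. E k y \<le> enat (h k)"
proof -
  obtain g where g: "\<And>y. y \<in> Y \<Longrightarrow> \<forall>\<^sub>F n in sequentially. code_map E y n \<le> enat (g n)"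
    using bdd unfolding bounded_EF_def by blast
  obtain h where h: "\<And>a. (\<exists>M. \<forall>k\<ge>M. a (Suc k) \<le> g (prod_encode (k, a k)))
                            \<Longrightarrow> \<forall>\<^sub>F k in sequentially. a k \<le> h k"
    using uniform_bound_of_code_recursion by blast
  show ?thesis
  proof (intro exI[of _ h] ballI)
    fix y assume y: "y \<in> Y"
    define a where "a k = the_enat (E k y)" for k
    have Ea: "E k y = enat (a k)" for k
      unfolding a_def using fin[OF y, of k] by (cases "E k y") auto
    obtain M where M: "\<And>n. M \<le> n \<Longrightarrow> code_map E y n \<le> enat (g n)"
      using g[OF y] unfolding eventually_sequentially by blast
    have "a (Suc k) \<le> g (prod_encode (k, a k))" if "M \<le> k" for k
      using M[of "prod_encode (k, a k)"] le_prod_encode_1[of k "a k"] that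
      by (simp add: code_map_encode Ea)
    then have "\<forall>\<^sub>F k in sequentially. a k \<le> h k"
      by (intro h) blast
    then show "\<forall>\<^sub>F k in sequentially. E k y \<le> enat (h k)"
      by (simp add: Ea)
  qed
qed

lemma eventually_covered_if_bounded:
  fixes D :: "nat \<Rightarrow> nat \<Rightarrow> 'a set"
  assumes bdd: "\<forall>\<Psi>. continuous_map X EF_top \<Psi> \<longrightarrow> bounded_EF (\<Psi> ` topspace X)"
    and D_open: "\<And>n j. openin X (D n j)" and D_closed: "\<And>n j. closedin X (D n j)"
    and Y: "Y \<subseteq> topspace X" and D_cover: "\<And>n. Y \<subseteq> (\<Union>j. D n j)"
  shows "\<exists>h. \<forall>y\<in>Y. \<forall>\<^sub>F k in sequentially. y \<in> (\<Union>j\<le>h k. D k j)"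
proof -
  obtain E where E_cont: "\<And>k. continuous_map X euclidean (E k)"
    and E_mono: "\<And>k x. E k x \<le> E (Suc k) x" and E_fin: "\<And>k y. y \<in> Y \<Longrightarrow> E k y < \<infinity>"
    and E_le: "\<And>k i y. y \<in> Y \<Longrightarrow> E k y \<le> enat i \<Longrightarrow> y \<in> (\<Union>j\<le>i. D k j)"
    using first_entry_maps[of X D Y, OF D_open D_closed Y D_cover] by blast
  have "bounded_EF (code_map E ` topspace X)"
    using bdd continuous_map_code_map[of X E, OF E_cont E_mono] by blast
  then have "bounded_EF (code_map E ` Y)"
    using Y unfolding bounded_EF_def by blast
  then obtain h where h: "\<forall>y\<in>Y. \<forall>\<^sub>F k in sequentially. E k y \<le> enat (h k)"
    using code_map_bound E_fin by blast
  have "\<forall>\<^sub>F k in sequentially. y \<in> (\<Union>j\<le>h k. D k j)" if y: "y \<in> Y" for y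
  proof -
    from h y have "\<forall>\<^sub>F k in sequentially. E k y \<le> enat (h k)" by blast
    then show ?thesis by eventually_elim (rule E_le[OF y])
  qed
  then show ?thesis by blast
qed

(* Backward direction: refine the given covers by clopen families D n, bound them by
  eventually_covered_if_bounded, and choose for each D k j a member V k j of the k-th cover
  containing its trace on Y. *)
lemma hurewicz_subspace_if_bounded:
  assumes clop: "\<forall>U. openin X U \<longrightarrow>
             (\<exists>\<C>. countable \<C> \<and> (\<forall>C\<in>\<C>. openin X C \<and> closedin X C) \<and> \<Union>\<C> = U)"
    and bdd: "\<forall>\<Psi>. continuous_map X EF_top \<Psi> \<longrightarrow> bounded_EF (\<Psi> ` topspace X)"
    and Y: "Y \<subseteq> topspace X"
  shows "hurewicz (subtopology X Y)"
proof (rule hurewiczI)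
  fix \<U> :: "nat \<Rightarrow> 'a set set"
  have tY: "topspace (subtopology X Y) = Y"
    using Y by (rule topspace_subtopology_subset)
  assume \<U>: "\<And>n. countable (\<U> n)" "\<And>n V. V \<in> \<U> n \<Longrightarrow> openin (subtopology X Y) V"
    "\<And>n. \<Union>(\<U> n) = topspace (subtopology X Y)"
    and no_finite_subcover: "\<And>n \<F>. finite \<F> \<Longrightarrow> \<F> \<subseteq> \<U> n \<Longrightarrow> \<Union>\<F> \<noteq> topspace (subtopology X Y)"
  have "Y \<noteq> {}"
    using no_finite_subcover[of "{}" 0] tY by simp
  have "\<exists>D :: nat \<Rightarrow> 'a set. (\<forall>j. openin X (D j) \<and> closedin X (D j)) \<and>
          Y \<subseteq> (\<Union>j. D j) \<and> (\<forall>j. \<exists>V\<in>\<U> n. D j \<inter> Y \<subseteq> V)" for n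
    using \<U> tY by (intro clopen_refinement[OF clop Y \<open>Y \<noteq> {}\<close>]) auto
  then obtain D :: "nat \<Rightarrow> nat \<Rightarrow> 'a set"
    where D_clopen: "\<And>n j. openin X (D n j) \<and> closedin X (D n j)"
      and D_cover: "\<And>n. Y \<subseteq> (\<Union>j. D n j)" and D_refines: "\<And>n j. \<exists>V\<in>\<U> n. D n j \<inter> Y \<subseteq> V"
    by metis
  obtain V :: "nat \<Rightarrow> nat \<Rightarrow> 'a set" where V: "\<And>n j. V n j \<in> \<U> n \<and> D n j \<inter> Y \<subseteq> V n j"
    using D_refines by metis
  have "\<exists>h. \<forall>y\<in>Y. \<forall>\<^sub>F k in sequentially. y \<in> (\<Union>j\<le>h k. D k j)"
    by (rule eventually_covered_if_bounded[OF bdd]) (use D_clopen D_cover Y in auto)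
  then obtain h where h: "\<And>y. y \<in> Y \<Longrightarrow> \<forall>\<^sub>F k in sequentially. y \<in> (\<Union>j\<le>h k. D k j)"
    by blast
  have "point_cofinite_cover (subtopology X Y) (range (\<lambda>k. \<Union>(V k ` {..h k})))"
  proof (rule point_cofinite_selection)
    show "\<Union>(\<U> n) = topspace (subtopology X Y)" for n
      by (fact \<U>(3))
    show "\<Union>\<F> \<noteq> topspace (subtopology X Y)" if "finite \<F>" "\<F> \<subseteq> \<U> n" for n \<F>
      using that by (rule no_finite_subcover)
    show "V n j \<in> \<U> n" for n j
      using V by blast
    show "\<forall>\<^sub>F k in sequentially. \<exists>j\<le>h k. y \<in> V k j" if "y \<in> topspace (subtopology X Y)" for y
    proof -
      have y: "y \<in> Y" using that tY by simp
      show ?thesis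
        using h[OF y] by eventually_elim (use V y in blast)
    qed
  qed
  moreover have "finite (V k ` {..h k}) \<and> V k ` {..h k} \<subseteq> \<U> k" for k
    using V by blast
  ultimately show "\<exists>\<F>. (\<forall>n. finite (\<F> n) \<and> \<F> n \<subseteq> \<U> n) \<and>
               point_cofinite_cover (subtopology X Y) (range (\<lambda>n. \<Union>(\<F> n)))"
    by (intro exI[of _ "\<lambda>k. V k ` {..h k}"]) blast
qed

theorem mainTheorem1:
  fixes X :: "'a topology"
  assumes "\<forall>U. openin X U \<longrightarrow>
             (\<exists>\<C>. countable \<C> \<and> (\<forall>C\<in>\<C>. openin X C \<and> closedin X C) \<and> \<Union>\<C> = U)"
  shows "hereditarily_hurewicz X \<longleftrightarrow>
         (\<forall>\<Psi>. continuous_map X EF_top \<Psi> \<longrightarrow> bounded_EF (\<Psi> ` topspace X))"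
proof
  assume "hereditarily_hurewicz X"
  then show "\<forall>\<Psi>. continuous_map X EF_top \<Psi> \<longrightarrow> bounded_EF (\<Psi> ` topspace X)"
    using hurewicz_imp_bounded by blast
next
  assume "\<forall>\<Psi>. continuous_map X EF_top \<Psi> \<longrightarrow> bounded_EF (\<Psi> ` topspace X)"
  then show "hereditarily_hurewicz X"
    unfolding hereditarily_hurewicz_def using hurewicz_subspace_if_bounded[OF assms] by blast
qed

end
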